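(* Let $k$ be a field of characteristic $p>0$, $P$ a finite poset, $R=\mathcal{R}_k[J(P)]$ the Hibi ring and $\mathfrak{m}=R_+$. Then for all sufficiently large $Q=p^e$ and every integer $r\ge(\operatorname{rank}^*P+2)(Q-1)+1$, we have $\mathfrak{m}^r\subseteq\mathfrak{m}^{[Q]}$.
   Context: Let $P=\{p_1,\dots,p_N\}$ be a finite poset and $J(P)$ the set of poset ideals of $P$ (down-closed subsets, including $\emptyset$ and $P$). The Hibi ring is $\mathcal{R}_k[J(P)]=k[\,T\prod_{p_i\in I}X_i\mid I\in J(P)\,]\subseteq k[T,X_1,\dots,X_N]$, each generator in degree $1$; $\mathfrak{m}=R_+$ is generated by these generators; $\mathfrak{m}^{[Q]}=(x^Q\mid x\in\mathfrak{m})$. $x\lessdot y$ means $x<y$ with no $z$ satisfying $x<z<y$. A path is a sequence $C=(q_1,\dots,q_t)$ of distinct elements of $P$ with $q_1$ minimal in $P$, consecutive elements related by $q_i\lessdot q_{i+1}$ or $q_{i+1}\lessdot q_i$, and $q_{t-1}\lessdot q_t$ (when $t\ge2$); it is maximal if $q_t$ is maximal in $P$. For $1<i<t$, $q_i$ is locally maximal if $q_{i-1}\lessdot q_i$ and $q_{i+1}\lessdot q_i$, locally minimal if $q_i\lessdot q_{i-1}$ and $q_i\lessdot q_{i+1}$; $q_1$ counts as locally minimal and $q_t$ as locally maximal. The decomposition $C=A_1+D_1+\cdots+D_{n-1}+A_n$ splits $C$ into consecutive blocks: $A_1$ is $q_1$ through the first locally maximal element, $D_1$ the following elements through the next locally minimal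 element, $A_2$ the following elements through the next locally maximal element, etc., $A_n$ ending at $q_t$; $t(A_i)$ is the last element of $A_i$, $V(\cdot)$ the set of elements of a block, $\langle A\rangle=\{q\in P\mid q\le t(A)\}$, and $\langle A_i\setminus t(A_i)\rangle$ the poset ideal generated by the elements of $A_i$ other than $t(A_i)$. $C$ satisfies ( * ) if for all $1\le i\le n-1$: (1) $V(D_i)\cap(\bigcup_{m=1}^{i-1}\langle A_m\rangle\cup\langle A_i\setminus t(A_i)\rangle\cup\{t(A_i)\})=\emptyset$; (2) $V(A_{i+1})\cap\bigcup_{m=1}^{i}\langle A_m\rangle=\emptyset$. $\operatorname{len}^*C=\#\{i\mid q_i\lessdot q_{i+1}\}$, and $\operatorname{rank}^*P$ is the maximum of $\operatorname{len}^*C$ over maximal paths $C$ satisfying ( * ). *)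

theory Defs
  imports Main "HOL-Library.Poly_Mapping"
begin

text \<open>Polynomials over 'k in the variables indexed by 'a option:
  None is the variable T, Some p is the variable X_p.\<close>

type_synonym ('a, 'k) mpoly = "('a option \<Rightarrow>\<^sub>0 nat) \<Rightarrow>\<^sub>0 'k"

definition poset_ideals :: "'a::order set \<Rightarrow> 'a set set" where
  "poset_ideals P = {I. I \<subseteq> P \<and> (\<forall>x\<in>I. \<forall>y\<in>P. y \<le> x \<longrightarrow> y \<in> I)}"

definition hibi_gen :: "'a set \<Rightarrow> ('a, 'k::comm_ring_1) mpoly" where
  "hibi_gen I = Poly_Mapping.single
     (Poly_Mapping.single None 1 + (\<Sum>x\<in>I. Poly_Mapping.single (Some x) 1)) 1"

inductive_set hibi_ring :: "'a::order set \<Rightarrow> ('a, 'k::field) mpoly set" for P where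
  const: "Poly_Mapping.single 0 c \<in> hibi_ring P"
| gen: "I \<in> poset_ideals P \<Longrightarrow> hibi_gen I \<in> hibi_ring P"
| add: "f \<in> hibi_ring P \<Longrightarrow> g \<in> hibi_ring P \<Longrightarrow> f + g \<in> hibi_ring P"
| mult: "f \<in> hibi_ring P \<Longrightarrow> g \<in> hibi_ring P \<Longrightarrow> f * g \<in> hibi_ring P"

definition hibi_max :: "'a::order set \<Rightarrow> ('a, 'k::field) mpoly set" where
  "hibi_max P = {f \<in> hibi_ring P. Poly_Mapping.lookup f 0 = 0}"

inductive_set ideal_span :: "'r::comm_ring_1 set \<Rightarrow> 'r set \<Rightarrow> 'r set" for R S where
  zero: "0 \<in> ideal_span R S"
| smult: "r \<in> R \<Longrightarrow> s \<in> S \<Longrightarrow> r * s \<in> ideal_span R S"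
| add: "a \<in> ideal_span R S \<Longrightarrow> b \<in> ideal_span R S \<Longrightarrow> a + b \<in> ideal_span R S"

definition ideal_pow :: "'r::comm_ring_1 set \<Rightarrow> 'r set \<Rightarrow> nat \<Rightarrow> 'r set" where
  "ideal_pow R M r = ideal_span R {prod_list xs | xs. length xs = r \<and> set xs \<subseteq> M}"

definition frob_pow :: "'r::comm_ring_1 set \<Rightarrow> 'r set \<Rightarrow> nat \<Rightarrow> 'r set" where
  "frob_pow R M Q = ideal_span R {x ^ Q | x. x \<in> M}"

definition covby :: "'a::order set \<Rightarrow> 'a \<Rightarrow> 'a \<Rightarrow> bool" where
  "covby P x y \<longleftrightarrow> x \<in> P \<and> y \<in> P \<and> x < y \<and> \<not> (\<exists>z\<in>P. x < z \<and> z < y)"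

text \<open>Paths are lists q = [q_1, ..., q_t] (0-indexed in Isabelle).\<close>
definition is_path :: "'a::order set \<Rightarrow> 'a list \<Rightarrow> bool" where
  "is_path P q \<longleftrightarrow> q \<noteq> [] \<and> distinct q \<and> set q \<subseteq> P
     \<and> (\<forall>y\<in>P. \<not> y < q ! 0)
     \<and> (\<forall>i. Suc i < length q \<longrightarrow> covby P (q ! i) (q ! Suc i) \<or> covby P (q ! Suc i) (q ! i))
     \<and> (length q \<ge> 2 \<longrightarrow> covby P (q ! (length q - 2)) (q ! (length q - 1)))"

definition is_maximal_path :: "'a::order set \<Rightarrow> 'a list \<Rightarrow> bool" where
  "is_maximal_path P q \<longleftrightarrow> is_path P q \<and> (\<forall>y\<in>P. \<not> last q < y)"

definition loc_max_idx :: "'a::order set \<Rightarrow> 'a list \<Rightarrow> nat set" where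
  "loc_max_idx P q = {i. i < length q \<and> (i = length q - 1 \<or>
     (0 < i \<and> covby P (q ! (i - 1)) (q ! i) \<and> covby P (q ! Suc i) (q ! i)))}"

definition loc_min_idx :: "'a::order set \<Rightarrow> 'a list \<Rightarrow> nat set" where
  "loc_min_idx P q = {i. i < length q \<and> (i = 0 \<or>
     (Suc i < length q \<and> covby P (q ! i) (q ! (i - 1)) \<and> covby P (q ! i) (q ! Suc i)))}"

text \<open>Number n of ascending blocks A_1, ..., A_n.\<close>
definition nblocks :: "'a::order set \<Rightarrow> 'a list \<Rightarrow> nat" where
  "nblocks P q = card (loc_max_idx P q)"

text \<open>Index of t(A_i), i.e. the i-th locally maximal element (i = 1..n).\<close>
definition a_end :: "'a::order set \<Rightarrow> 'a list \<Rightarrow> nat \<Rightarrow> nat" where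
  "a_end P q i = sorted_list_of_set (loc_max_idx P q) ! (i - 1)"

text \<open>Index of the last element of D_i, i.e. the (i+1)-th locally minimal element
  (the 1st being q_1), i = 1..n-1.\<close>
definition d_end :: "'a::order set \<Rightarrow> 'a list \<Rightarrow> nat \<Rightarrow> nat" where
  "d_end P q i = sorted_list_of_set (loc_min_idx P q) ! i"

definition VA :: "'a::order set \<Rightarrow> 'a list \<Rightarrow> nat \<Rightarrow> 'a set" where
  "VA P q i = {q ! j | j. (if i = 1 then 0 \<le> j else d_end P q (i - 1) < j) \<and> j \<le> a_end P q i}"

definition VD :: "'a::order set \<Rightarrow> 'a list \<Rightarrow> nat \<Rightarrow> 'a set" where
  "VD P q i = {q ! j | j. a_end P q i < j \<and> j \<le> d_end P q i}"

definition tA :: "'a::order set \<Rightarrow> 'a list \<Rightarrow> nat \<Rightarrow> 'a" where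
  "tA P q i = q ! a_end P q i"

text \<open>The poset ideal \<langle>A_i\<rangle> = {x in P. x \<le> t(A_i)}.\<close>
definition genA :: "'a::order set \<Rightarrow> 'a list \<Rightarrow> nat \<Rightarrow> 'a set" where
  "genA P q i = {x \<in> P. x \<le> tA P q i}"

definition genA_minus :: "'a::order set \<Rightarrow> 'a list \<Rightarrow> nat \<Rightarrow> 'a set" where
  "genA_minus P q i = {x \<in> P. \<exists>y \<in> VA P q i - {tA P q i}. x \<le> y}"

definition star_cond :: "'a::order set \<Rightarrow> 'a list \<Rightarrow> bool" where
  "star_cond P q \<longleftrightarrow> (\<forall>i. 1 \<le> i \<and> i \<le> nblocks P q - 1 \<longrightarrow>
     VD P q i \<inter> ((\<Union>m\<in>{1..<i}. genA P q m) \<union> genA_minus P q i \<union> {tA P q i}) = {}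
     \<and> VA P q (Suc i) \<inter> (\<Union>m\<in>{1..i}. genA P q m) = {})"

definition len_star :: "'a::order set \<Rightarrow> 'a list \<Rightarrow> nat" where
  "len_star P q = card {i. Suc i < length q \<and> covby P (q ! i) (q ! Suc i)}"

definition rank_star :: "'a::order set \<Rightarrow> nat" where
  "rank_star P = Max {len_star P q | q. is_maximal_path P q \<and> star_cond P q}"

end

theory Submission
  imports Defs
begin

text \<open>A product of \<open>s\<close> generators of the Hibi ring is a monomial \<open>T\<^sup>s \<Prod> X\<^sub>x\<^bsup>c x\<^esup>\<close> with
  \<open>c\<close> antitone on \<open>P\<close>. It lies in \<open>m\<^bsup>[Q]\<^esup>\<close> as soon as some poset ideal \<open>I\<close> has \<open>c \<ge> Q\<close>
  on \<open>I\<close> while \<open>c\<close> lowered by \<open>Q\<close> on \<open>I\<close> stays antitone and bounded by \<open>s - Q\<close>: the monomial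
  is then \<open>g\<^sub>I\<^sup>Q\<close> times the product of the generators attached to the level sets of the
  lowered weight. The natural candidate for \<open>I\<close> is the closure of \<open>{c > s - Q}\<close> under going
  down and under going up along covers \<open>covby P p z\<close> with \<open>c p < c z + Q\<close>. An element forced in
  round \<open>n\<close> has \<open>c > s - Q - n (Q - 1)\<close>. If the closure contained an element with \<open>c < Q\<close>, it would
  contain a maximal element reached by a path satisfying (*) whose number of upward steps
  bounds the number of rounds; as this number is at most \<open>rank\<^sup>* P\<close>, the bound on \<open>s\<close> forces
  \<open>c \<ge> Q\<close> on the closure.\<close>

section \<open>Covers and the blocks of a path\<close>

lemma covby_less: "covby P x y \<Longrightarrow> x < y"
  by (simp add: covby_def)

lemma covby_asym: "covby P x y \<Longrightarrow> \<not> covby P y x"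
  by (auto simp: covby_def)

lemma finite_covby_below:
  assumes "finite P" "x \<in> P" "z \<in> P" "x < z"
  shows "\<exists>y\<in>P. x \<le> y \<and> covby P y z"
proof -
  have "finite {y\<in>P. x \<le> y \<and> y < z}" "{y\<in>P. x \<le> y \<and> y < z} \<noteq> {}"
    using assms by auto
  then obtain y where y: "y \<in> P" "x \<le> y" "y < z"
    and max: "\<And>w. w \<in> P \<Longrightarrow> x \<le> w \<Longrightarrow> w < z \<Longrightarrow> y \<le> w \<Longrightarrow> y = w"
    by (auto dest!: finite_has_maximal)
  have "\<not> (\<exists>w\<in>P. y < w \<and> w < z)"
    using y max by (metis order.strict_iff_not order.trans)
  with y assms show ?thesis by (auto simp: covby_def)
qed

lemma finite_covby_above:
  assumes "finite P" "x \<in> P" "z \<in> P" "x < z"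
  shows "\<exists>y\<in>P. covby P x y \<and> y \<le> z"
proof -
  have "finite {y\<in>P. x < y \<and> y \<le> z}" "{y\<in>P. x < y \<and> y \<le> z} \<noteq> {}"
    using assms by auto
  then obtain y where y: "y \<in> P" "x < y" "y \<le> z"
    and min: "\<And>w. w \<in> P \<Longrightarrow> x < w \<Longrightarrow> w \<le> z \<Longrightarrow> w \<le> y \<Longrightarrow> y = w"
    by (auto dest!: finite_has_minimal)
  have "\<not> (\<exists>w\<in>P. x < w \<and> w < y)"
    using y min by (metis order.strict_iff_not order.trans)
  with y assms show ?thesis by (auto simp: covby_def)
qed

lemma nth_less_of_steps_up:
  fixes xs :: "'a::order list"
  assumes "\<And>k. a \<le> k \<Longrightarrow> k < b \<Longrightarrow> xs ! k < xs ! Suc k" "a < b"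
  shows "xs ! a < xs ! b"
  using assms
proof (induction b)
  case (Suc b)
  have step: "xs ! b < xs ! Suc b" using Suc.prems by simp
  show ?case
  proof (cases "a = b")
    case False
    with Suc have "xs ! a < xs ! b" by simp
    with step show ?thesis by order
  qed (use step in simp)
qed simp

lemma nth_less_of_steps_down:
  fixes xs :: "'a::order list"
  assumes "\<And>k. a \<le> k \<Longrightarrow> k < b \<Longrightarrow> xs ! Suc k < xs ! k" "a < b"
  shows "xs ! b < xs ! a"
  using assms
proof (induction b)
  case (Suc b)
  have step: "xs ! Suc b < xs ! b" using Suc.prems by simp
  show ?case
  proof (cases "a = b")
    case False
    with Suc have "xs ! b < xs ! a" by simp
    with step show ?thesis by order
  qed (use step in simp)
qed simp

lemma card_less_sorted_list_of_set_nth: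
  fixes S :: "nat set"
  assumes "finite S" "k < card S"
  shows "card {y\<in>S. y < sorted_list_of_set S ! k} = k"
proof -
  let ?xs = "sorted_list_of_set S"
  have sorted: "sorted_wrt (<) ?xs" and k: "k < length ?xs"
    using assms by simp_all
  have "{y\<in>S. y < ?xs ! k} = set (take k ?xs)"
  proof (intro equalityI subsetI)
    fix y assume "y \<in> {y\<in>S. y < ?xs ! k}"
    then obtain i where i: "i < length ?xs" "?xs ! i = y" "y < ?xs ! k"
      using assms(1) by (metis (lifting) in_set_conv_nth mem_Collect_eq set_sorted_list_of_set)
    have "i < k"
      using sorted_wrt_nth_less[OF sorted, of k i] i by (metis linorder_neqE_nat order.asym)
    with i show "y \<in> set (take k ?xs)" by (auto simp: in_set_conv_nth)
  next
    fix y assume "y \<in> set (take k ?xs)"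
    then obtain i where "i < k" "?xs ! i = y" using k by (auto simp: in_set_conv_nth)
    with sorted_wrt_nth_less[OF sorted _ k] k assms(1) show "y \<in> {y\<in>S. y < ?xs ! k}"
      by (metis (mono_tags, lifting) mem_Collect_eq nth_mem order.strict_trans
          set_sorted_list_of_set)
  qed
  moreover have "distinct ?xs" by simp
  ultimately show ?thesis using k by (simp add: distinct_card)
qed

lemma sorted_list_of_set_nth_mem:
  "finite S \<Longrightarrow> k < card S \<Longrightarrow> sorted_list_of_set S ! k \<in> S"
  by (metis length_sorted_list_of_set nth_mem set_sorted_list_of_set)

lemma card_less_Suc_filter:
  fixes S :: "nat set"
  assumes "finite S"
  shows "card {y\<in>S. y < Suc x} = card {y\<in>S. y < x} + (if x \<in> S then 1 else 0)"
proof -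
  have "{y\<in>S. y < Suc x} = (if x \<in> S then insert x {y\<in>S. y < x} else {y\<in>S. y < x})"
    by (auto simp: less_Suc_eq)
  then show ?thesis by simp
qed

lemma is_path_step:
  "is_path P q \<Longrightarrow> Suc j < length q \<Longrightarrow> covby P (q!j) (q!Suc j) \<or> covby P (q!Suc j) (q!j)"
  by (simp add: is_path_def)

lemma is_path_first_step_up:
  assumes "is_path P q" "Suc 0 < length q"
  shows "covby P (q!0) (q!Suc 0)"
  using is_path_step[OF assms] assms by (fastforce simp: is_path_def covby_def)

lemma finite_loc_max_idx: "finite (loc_max_idx P q)"
  by (simp add: loc_max_idx_def)

lemma finite_loc_min_idx: "finite (loc_min_idx P q)"
  by (simp add: loc_min_idx_def)

text \<open>Along a path the local minima and maxima alternate, beginning with the minimum at index 0.\<close>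

lemma card_loc_min_idx_less:
  assumes path: "is_path P q" and "x < length q"
  shows "card {d\<in>loc_min_idx P q. d < x} = card {a\<in>loc_max_idx P q. a < x}
           + (if 0 < x \<and> covby P (q!(x-1)) (q!x) then 1 else 0)"
  using \<open>x < length q\<close>
proof (induction x)
  case (Suc x)
  have step: "covby P (q!x) (q!Suc x) \<or> covby P (q!Suc x) (q!x)"
    using is_path_step[OF path Suc.prems] .
  note counts = card_less_Suc_filter[OF finite_loc_min_idx, of P q x]
    card_less_Suc_filter[OF finite_loc_max_idx, of P q x]
  show ?case
  proof (cases x)
    case 0
    moreover have "q \<noteq> []" using Suc.prems by auto
    ultimately show ?thesis
      using counts is_path_first_step_up[OF path] Suc.prems
      by (simp add: loc_min_idx_def loc_max_idx_def)
  next
    case (Suc y)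
    have "covby P (q!y) (q!x) \<or> covby P (q!x) (q!y)"
      using is_path_step[OF path, of y] Suc.prems Suc by simp
    moreover have "x \<in> loc_max_idx P q \<longleftrightarrow> covby P (q!y) (q!x) \<and> covby P (q!Suc x) (q!x)"
      "x \<in> loc_min_idx P q \<longleftrightarrow> covby P (q!x) (q!y) \<and> covby P (q!x) (q!Suc x)"
      using Suc.prems Suc by (auto simp: loc_max_idx_def loc_min_idx_def)
    moreover have "\<not> (covby P (q!y) (q!x) \<and> covby P (q!x) (q!y))"
      "\<not> (covby P (q!x) (q!Suc x) \<and> covby P (q!Suc x) (q!x))"
      using covby_asym by blast+
    ultimately show ?thesis
      using counts Suc.IH Suc.prems step Suc by (auto split: if_splits)
  qed
qed simp

lemma last_in_loc_max_idx: "q \<noteq> [] \<Longrightarrow> length q - 1 \<in> loc_max_idx P q"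
  by (simp add: loc_max_idx_def)

lemma card_loc_max_idx_less_last:
  assumes "q \<noteq> []"
  shows "card {a\<in>loc_max_idx P q. a < length q - 1} = nblocks P q - 1"
proof -
  have "{a\<in>loc_max_idx P q. a < length q - 1} = loc_max_idx P q - {length q - 1}"
    by (auto simp: loc_max_idx_def)
  then show ?thesis
    using last_in_loc_max_idx[OF assms] finite_loc_max_idx by (simp add: nblocks_def)
qed

lemma a_end_in_loc_max_idx:
  assumes "1 \<le> m" "m \<le> nblocks P q"
  shows "a_end P q m \<in> loc_max_idx P q"
    and "card {a\<in>loc_max_idx P q. a < a_end P q m} = m - 1"
proof -
  have "m - 1 < card (loc_max_idx P q)" using assms by (simp add: nblocks_def)
  then show "a_end P q m \<in> loc_max_idx P q"
    and "card {a\<in>loc_max_idx P q. a < a_end P q m} = m - 1"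
    by (simp_all add: a_end_def sorted_list_of_set_nth_mem card_less_sorted_list_of_set_nth
        finite_loc_max_idx)
qed

lemma a_end_strict_mono:
  assumes "1 \<le> m" "m < m'" "m' \<le> nblocks P q"
  shows "a_end P q m < a_end P q m'"
proof (rule ccontr)
  assume "\<not> a_end P q m < a_end P q m'"
  then have "card {a\<in>loc_max_idx P q. a < a_end P q m'} \<le> card {a\<in>loc_max_idx P q. a < a_end P q m}"
    by (intro card_mono) (auto simp: finite_loc_max_idx)
  then show False
    using a_end_in_loc_max_idx(2)[of m P q] a_end_in_loc_max_idx(2)[of m' P q] assms by simp
qed

lemma a_end_interior:
  assumes path: "is_path P q" and i: "1 \<le> i" "i < nblocks P q"
  defines "a \<equiv> a_end P q i"
  shows "0 < a" "Suc a < length q" "covby P (q!(a-1)) (q!a)" "covby P (q!Suc a) (q!a)"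
proof -
  have "q \<noteq> []" using path by (simp add: is_path_def)
  have "a \<noteq> length q - 1"
    using a_end_in_loc_max_idx(2)[of i P q] card_loc_max_idx_less_last[OF \<open>q \<noteq> []\<close>] i
    by (auto simp: a_def)
  then show "0 < a" "Suc a < length q" "covby P (q!(a-1)) (q!a)" "covby P (q!Suc a) (q!a)"
    using a_end_in_loc_max_idx(1)[of i P q] i by (auto simp: a_def loc_max_idx_def)
qed

lemma d_end_interior:
  assumes path: "is_path P q" and i: "1 \<le> i" "i < nblocks P q"
  defines "a \<equiv> a_end P q i" and "d \<equiv> d_end P q i"
  shows "a < d" "Suc d < length q" "covby P (q!d) (q!Suc d)"
proof -
  let ?Lmin = "loc_min_idx P q"
  note a = a_end_interior[OF path i, folded a_def]
  have "q \<noteq> []" using path by (simp add: is_path_def)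
  have below_a: "card {y\<in>?Lmin. y < Suc a} = i"
    using card_loc_min_idx_less[OF path a(2)] card_less_Suc_filter[OF finite_loc_max_idx, of P q a]
      a_end_in_loc_max_idx[of i P q] covby_asym[OF a(4)] i
    by (simp add: a_def)
  have "card {y\<in>?Lmin. y < length q - 1} = nblocks P q"
    using card_loc_min_idx_less[OF path, of "length q - 1"] card_loc_max_idx_less_last[OF \<open>q \<noteq> []\<close>]
      is_path_def[of P q] path a(2) i
    by (auto simp: numeral_2_eq_2 Suc_diff_Suc)
  then have "i < card ?Lmin"
    using card_mono[OF finite_loc_min_idx, of "{y\<in>?Lmin. y < length q - 1}" P q] i by auto
  then have d: "d \<in> ?Lmin" "card {y\<in>?Lmin. y < d} = i"
    using sorted_list_of_set_nth_mem[OF finite_loc_min_idx]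
      card_less_sorted_list_of_set_nth[OF finite_loc_min_idx]
    by (simp_all add: d_def d_end_def)
  show "a < d"
  proof (rule ccontr)
    assume "\<not> a < d"
    then have "card {y\<in>?Lmin. y < Suc d} \<le> card {y\<in>?Lmin. y < Suc a}"
      by (intro card_mono) (auto simp: finite_loc_min_idx)
    then show False
      using card_less_Suc_filter[OF finite_loc_min_idx, of P q d] d below_a by simp
  qed
  with d(1) show "Suc d < length q" "covby P (q!d) (q!Suc d)"
    by (auto simp: loc_min_idx_def)
qed

lemma len_star_le_rank_star:
  assumes "finite P" "is_maximal_path P q" "star_cond P q"
  shows "len_star P q \<le> rank_star P"
proof -
  let ?S = "{len_star P q | q. is_maximal_path P q \<and> star_cond P q}"
  have "?S \<subseteq> len_star P ` {q. set q \<subseteq> P \<and> length q \<le> card P}"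
  proof
    fix k assume "k \<in> ?S"
    then obtain q' where q': "k = len_star P q'" "is_maximal_path P q'" by blast
    then have "set q' \<subseteq> P" "distinct q'" by (auto simp: is_maximal_path_def is_path_def)
    then have "length q' \<le> card P"
      using distinct_card[of q'] card_mono[OF assms(1) \<open>set q' \<subseteq> P\<close>] by simp
    with q' \<open>set q' \<subseteq> P\<close> show "k \<in> len_star P ` {q. set q \<subseteq> P \<and> length q \<le> card P}"
      by blast
  qed
  moreover have "finite (len_star P ` {q. set q \<subseteq> P \<and> length q \<le> card P})"
    using finite_lists_length_le[OF assms(1)] by blast
  ultimately have "finite ?S" by (rule finite_subset)
  moreover have "len_star P q \<in> ?S" using assms by blast
  ultimately show ?thesis unfolding rank_star_def by (rule Max_ge)
qed

lemma rank_bound_ge: "(k + 2) * (Q - 1) + 1 \<le> (s::nat) \<Longrightarrow> 2 * Q \<le> s + 1"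
  using mult_le_mono1[of 2 "k + 2" "Q - 1"] by linarith

section \<open>The ideal forced by an antitone weight\<close>

text \<open>In the application \<open>c x\<close> counts the factors containing \<open>x\<close> in a product of \<open>s\<close>
  generators. A poset ideal \<open>I\<close> for which \<open>c\<close>, lowered by \<open>Q\<close> on \<open>I\<close>, stays antitone and
  bounded by \<open>s - Q\<close> must contain the elements with \<open>c x > s - Q\<close>, and it must contain \<open>z\<close> whenever it contains some
  \<open>p\<close> with \<open>covby P p z\<close> and \<open>c p < c z + Q\<close>; \<open>forced n\<close> is what these rules, together
  with downward closure, force within \<open>n\<close> rounds.\<close>

locale antitone_weight =
  fixes P :: "'a::order set" and c :: "'a \<Rightarrow> nat" and s Q :: nat
  assumes finite_P: "finite P"
    and antitone: "\<And>x y. x \<in> P \<Longrightarrow> y \<in> P \<Longrightarrow> x \<le> y \<Longrightarrow> c y \<le> c x"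
    and Q_pos: "1 \<le> Q"
begin

primrec forced :: "nat \<Rightarrow> 'a set" where
  "forced 0 = {x\<in>P. s - Q < c x}"
| "forced (Suc n) = {y\<in>P. \<exists>z. y \<le> z \<and>
     (z \<in> forced n \<or> (z \<in> P \<and> (\<exists>p\<in>forced n. covby P p z \<and> c p < c z + Q)))}"

definition level :: "'a \<Rightarrow> nat" where
  "level x = (LEAST n. x \<in> forced n)"

definition forced_set :: "'a set" where
  "forced_set = (\<Union>n. forced n)"

lemma forced_subset: "forced n \<subseteq> P"
  by (cases n) auto

lemma forced_down_closed: "x \<in> forced n \<Longrightarrow> y \<in> P \<Longrightarrow> y \<le> x \<Longrightarrow> y \<in> forced n"
proof (cases n)
  case (Suc m)
  assume "x \<in> forced n" "y \<in> P" "y \<le> x"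
  with Suc show ?thesis by (auto dest: order_trans[of y x])
qed (use antitone[of y x] in auto)

lemma forced_mono: "m \<le> n \<Longrightarrow> forced m \<subseteq> forced n"
proof (induction n)
  case (Suc n)
  have "forced n \<subseteq> forced (Suc n)" using forced_subset by auto
  with Suc show ?case by (auto simp: le_Suc_eq simp del: forced.simps)
qed simp

lemma forced_cover:
  assumes "p \<in> forced n" "covby P p z" "c p < c z + Q"
  shows "z \<in> forced (Suc n)"
  using assms by (auto simp: covby_def)

text \<open>Each round can lower the admissible weight by at most \<open>Q - 1\<close>.\<close>

lemma weight_bound_forced: "x \<in> forced n \<Longrightarrow> s < c x + Q + (Q - 1) * n"
proof (induction n arbitrary: x)
  case (Suc n)
  then obtain z where z: "x \<le> z" "x \<in> P"
    "z \<in> forced n \<or> (z \<in> P \<and> (\<exists>p\<in>forced n. covby P p z \<and> c p < c z + Q))"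
    by auto
  then have "c z \<le> c x" using antitone forced_subset by blast
  obtain p where "p \<in> forced n" "c p < c z + Q"
    using z(3) Q_pos by force
  then have "s < c p + Q + (Q - 1) * n" using Suc.IH by blast
  moreover have "(Q - 1) * Suc n = (Q - 1) * n + (Q - 1)" by simp
  ultimately show ?case using \<open>c p < c z + Q\<close> \<open>c z \<le> c x\<close> by linarith
qed (use Q_pos in auto)

lemma level_forced: "x \<in> forced n \<Longrightarrow> x \<in> forced (level x) \<and> level x \<le> n"
  using LeastI[of "\<lambda>n. x \<in> forced n" n] Least_le[of "\<lambda>n. x \<in> forced n" n]
  by (simp add: level_def)

lemma level_mono:
  assumes "x \<in> forced n" "y \<in> P" "y \<le> x"
  shows "level y \<le> level x"
proof -
  have "y \<in> forced (level x)"
    using forced_down_closed level_forced[OF assms(1)] assms(2,3) by blast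
  then show ?thesis using level_forced[of y "level x"] by simp
qed

lemma level_eq_Suc:
  assumes "x \<in> forced (Suc n)" "x \<notin> forced n"
  shows "level x = Suc n"
proof -
  have "\<not> level x \<le> n"
    using forced_mono[of "level x" n] level_forced[OF assms(1)] assms(2) by auto
  then show ?thesis using level_forced[OF assms(1)] by simp
qed

lemma level_forced_0: "x \<in> forced 0 \<Longrightarrow> level x = 0"
  using level_forced by blast

lemma forced_setI: "x \<in> forced n \<Longrightarrow> x \<in> forced_set"
  unfolding forced_set_def by blast

lemma forced_set_subset: "forced_set \<subseteq> P"
  using forced_subset by (auto simp: forced_set_def)

lemma forced_set_poset_ideal: "forced_set \<in> poset_ideals P"
proof -
  have "y \<in> forced_set" if x: "x \<in> forced_set" and y: "y \<in> P" "y \<le> x" for x y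
  proof -
    obtain n where "x \<in> forced n" using x by (auto simp: forced_set_def)
    then show ?thesis using forced_down_closed forced_setI y by blast
  qed
  then show ?thesis using forced_set_subset by (auto simp: poset_ideals_def)
qed

lemma forced_set_up:
  assumes "x \<in> forced_set" "y \<in> P" "x \<le> y" "c x < c y + Q"
  shows "y \<in> forced_set"
  using assms
proof (induction "card {w\<in>P. x < w \<and> w \<le> y}" arbitrary: x rule: less_induct)
  case less
  show ?case
  proof (cases "x = y")
    case False
    have "x \<in> P" "x < y" using less.prems False forced_set_subset by auto
    then obtain w where w: "w \<in> P" "covby P x w" "w \<le> y"
      using finite_covby_above[OF finite_P _ less.prems(2)] by blast
    have "x < w" using covby_less[OF w(2)] .
    have cw: "c y \<le> c w" "c w \<le> c x"
      using antitone[OF w(1) less.prems(2) w(3)] antitone[OF \<open>x \<in> P\<close> w(1)] \<open>x < w\<close> by simp_all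
    obtain n where "x \<in> forced n" using less.prems(1) by (auto simp: forced_set_def)
    then have "w \<in> forced (Suc n)"
      using forced_cover[OF _ w(2)] cw less.prems(4) by simp
    then have "w \<in> forced_set" by (rule forced_setI)
    have "{v\<in>P. w < v \<and> v \<le> y} \<subset> {v\<in>P. x < v \<and> v \<le> y}"
      using w(1,3) \<open>x < w\<close> by (auto dest: order.strict_trans[OF \<open>x < w\<close>])
    then have "card {v\<in>P. w < v \<and> v \<le> y} < card {v\<in>P. x < v \<and> v \<le> y}"
      using finite_P by (intro psubset_card_mono) auto
    from less.hyps[OF this \<open>w \<in> forced_set\<close> less.prems(2) w(3)] cw less.prems(4)
    show ?thesis by linarith
  qed (use less.prems in simp)
qed

text \<open>A levelled path climbs inside \<open>forced 0\<close> up to index \<open>pe\<close>; from then on every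
  upward cover raises the level by one and every downward cover keeps it. Its endpoint
  therefore has level at most its number of upward steps.\<close>

definition levelled_step :: "nat \<Rightarrow> 'a \<Rightarrow> 'a \<Rightarrow> nat \<Rightarrow> bool" where
  "levelled_step pe x y j \<longleftrightarrow>
     (j < pe \<longrightarrow> covby P x y)
   \<and> (pe \<le> j \<longrightarrow> (covby P x y \<and> level y = Suc (level x))
                 \<or> (j \<noteq> pe \<and> covby P y x \<and> level y = level x))"

definition levelled_path :: "'a list \<Rightarrow> nat \<Rightarrow> bool" where
  "levelled_path q pe \<longleftrightarrow> q \<noteq> [] \<and> pe < length q \<and> set q \<subseteq> forced_set
     \<and> (\<forall>y\<in>P. \<not> y < q!0) \<and> (\<forall>j\<le>pe. q!j \<in> forced 0)
     \<and> (\<forall>j. Suc j < length q \<longrightarrow> levelled_step pe (q!j) (q!Suc j) j)"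

lemma levelled_path_snoc:
  assumes path: "levelled_path q pe" and "y \<in> forced_set"
    and step: "levelled_step pe (last q) y (length q - 1)"
  shows "levelled_path (q @ [y]) pe"
proof -
  have "q \<noteq> []" "pe < length q" using path by (auto simp: levelled_path_def)
  then have "last q = q ! (length q - 1)" by (simp add: last_conv_nth)
  have "levelled_step pe ((q @ [y]) ! j) ((q @ [y]) ! Suc j) j" if "Suc j < Suc (length q)" for j
  proof (cases "Suc j < length q")
    case True
    then show ?thesis using path by (simp add: levelled_path_def nth_append)
  next
    case False
    with that have "j = length q - 1" by simp
    with step \<open>last q = _\<close> \<open>q \<noteq> []\<close> show ?thesis by (simp add: nth_append)
  qed
  with path \<open>y \<in> forced_set\<close> \<open>q \<noteq> []\<close> \<open>pe < length q\<close> show ?thesis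
    by (auto simp: levelled_path_def nth_append)
qed

lemma levelled_path_snoc_initial:
  assumes path: "levelled_path q (length q - 1)" and "y \<in> forced 0"
    and cover: "covby P (last q) y"
  shows "levelled_path (q @ [y]) (length q)"
proof -
  have "q \<noteq> []" using path by (simp add: levelled_path_def)
  then have "last q = q ! (length q - 1)" by (simp add: last_conv_nth)
  have "covby P ((q @ [y]) ! j) ((q @ [y]) ! Suc j)" if "j < length q" for j
  proof (cases "Suc j < length q")
    case True
    then show ?thesis using path by (simp add: levelled_path_def levelled_step_def nth_append)
  next
    case False
    with that have "j = length q - 1" by simp
    with cover \<open>last q = _\<close> \<open>q \<noteq> []\<close> show ?thesis by (simp add: nth_append)
  qed
  moreover have "(q @ [y]) ! j \<in> forced 0" if "j \<le> length q" for j
  proof (cases "j = length q")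
    case False
    with that \<open>q \<noteq> []\<close> have "j \<le> length q - 1" "j < length q" by auto
    with path show ?thesis by (simp add: levelled_path_def nth_append del: forced.simps)
  qed (use \<open>y \<in> forced 0\<close> in \<open>simp add: nth_append del: forced.simps\<close>)
  ultimately show ?thesis
    using path \<open>q \<noteq> []\<close> forced_setI[OF \<open>y \<in> forced 0\<close>]
    by (auto simp: levelled_path_def levelled_step_def nth_append)
qed

lemma exists_levelled_path_initial:
  "x \<in> forced 0 \<Longrightarrow> \<exists>q. levelled_path q (length q - 1) \<and> last q = x"
proof (induction "card {y\<in>P. y < x}" arbitrary: x rule: less_induct)
  case less
  have "x \<in> P" using less.prems by simp
  show ?case
  proof (cases "\<exists>y\<in>P. y < x")
    case False
    then have "levelled_path [x] 0"
      using less.prems forced_setI[OF less.prems] by (auto simp: levelled_path_def)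
    then show ?thesis by (intro exI[of _ "[x]"]) simp
  next
    case True
    then obtain y where y: "y \<in> P" "covby P y x"
      using finite_covby_below[OF finite_P _ \<open>x \<in> P\<close>] by blast
    have "y < x" using covby_less[OF y(2)] .
    have "y \<in> forced 0" using forced_down_closed[OF less.prems y(1)] \<open>y < x\<close> by simp
    have "{w\<in>P. w < y} \<subset> {w\<in>P. w < x}"
      using \<open>y < x\<close> y(1) by (auto dest: order.strict_trans[OF _ \<open>y < x\<close>])
    then have "card {w\<in>P. w < y} < card {w\<in>P. w < x}"
      using finite_P by (intro psubset_card_mono) auto
    then obtain q where q: "levelled_path q (length q - 1)" "last q = y"
      using less.hyps \<open>y \<in> forced 0\<close> by blast
    then have "levelled_path (q @ [x]) (length q)"
      using levelled_path_snoc_initial less.prems y(2) by blast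
    then show ?thesis by (intro exI[of _ "q @ [x]"]) simp
  qed
qed

lemma levelled_path_extend_down:
  assumes "levelled_path q pe" "pe < length q - 1" "x \<in> P" "x \<le> last q"
    "level x = level (last q)"
  shows "\<exists>q'. levelled_path q' pe \<and> last q' = x"
  using assms
proof (induction "card {w\<in>P. x \<le> w \<and> w < last q}" arbitrary: q rule: less_induct)
  case less
  show ?case
  proof (cases "x = last q")
    case False
    let ?z = "last q"
    have "x < ?z" using False less.prems(4) by simp
    have "q \<noteq> []" using less.prems(1) by (simp add: levelled_path_def)
    then have "?z \<in> forced_set" using less.prems(1) by (auto simp: levelled_path_def)
    then obtain n where "?z \<in> forced n" by (auto simp: forced_set_def)
    then have "?z \<in> P" using forced_subset by auto
    then obtain y where y: "y \<in> P" "x \<le> y" "covby P y ?z"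
      using finite_covby_below[OF finite_P less.prems(3) _ \<open>x < ?z\<close>] by blast
    have "y < ?z" using covby_less[OF y(3)] .
    have "y \<in> forced n" using forced_down_closed[OF \<open>?z \<in> forced n\<close> y(1)] \<open>y < ?z\<close> by simp
    have "level x \<le> level y" "level y \<le> level ?z"
      using level_mono[OF \<open>y \<in> forced n\<close> less.prems(3) y(2)]
        level_mono[OF \<open>?z \<in> forced n\<close> y(1)] \<open>y < ?z\<close> by simp_all
    then have "level y = level ?z" using less.prems(5) by simp
    then have path': "levelled_path (q @ [y]) pe"
      using levelled_path_snoc[OF less.prems(1) forced_setI[OF \<open>y \<in> forced n\<close>]] y(3)
        less.prems(2) by (simp add: levelled_step_def)
    have "{w\<in>P. x \<le> w \<and> w < y} \<subset> {w\<in>P. x \<le> w \<and> w < ?z}"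
      using \<open>y < ?z\<close> y(1,2) by (auto dest: order.strict_trans[OF _ \<open>y < ?z\<close>])
    then have "card {w\<in>P. x \<le> w \<and> w < y} < card {w\<in>P. x \<le> w \<and> w < ?z}"
      using finite_P by (intro psubset_card_mono) auto
    then show ?thesis
      using less.hyps[of "q @ [y]"] path' less.prems(2,3,5) y(2) \<open>level y = level ?z\<close> by simp
  qed (use less.prems in blast)
qed

text \<open>An element first forced in round \<open>n + 1\<close> lies below some \<open>z\<close> covering a \<open>p\<close> forced
  in round \<open>n\<close>: a levelled path to \<open>p\<close> is extended by the ascent to \<open>z\<close> and then descends
  inside level \<open>n + 1\<close>.\<close>

lemma exists_levelled_path: "x \<in> forced n \<Longrightarrow> \<exists>q pe. levelled_path q pe \<and> last q = x"
proof (induction n arbitrary: x)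
  case 0
  then show ?case using exists_levelled_path_initial by blast
next
  case (Suc n)
  show ?case
  proof (cases "x \<in> forced n")
    case False
    from Suc.prems obtain z where "x \<in> P" "x \<le> z"
      "z \<in> forced n \<or> (z \<in> P \<and> (\<exists>p\<in>forced n. covby P p z \<and> c p < c z + Q))"
      by auto
    moreover have "z \<notin> forced n"
      using False forced_down_closed \<open>x \<in> P\<close> \<open>x \<le> z\<close> by blast
    ultimately obtain p where p: "p \<in> forced n" "covby P p z" "c p < c z + Q" by blast
    have "z \<in> forced (Suc n)" using forced_cover[OF p] .
    have level_z: "level z = Suc n" using level_eq_Suc[OF \<open>z \<in> forced (Suc n)\<close> \<open>z \<notin> forced n\<close>] .
    have "level p = n"
    proof (rule ccontr)
      assume "level p \<noteq> n"
      then have "Suc (level p) \<le> n" using level_forced[OF p(1)] by simp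
      moreover have "z \<in> forced (Suc (level p))"
        using forced_cover[OF conjunct1[OF level_forced[OF p(1)]] p(2,3)] .
      ultimately show False using forced_mono \<open>z \<notin> forced n\<close> by blast
    qed
    obtain q pe where q: "levelled_path q pe" "last q = p" using Suc.IH[OF p(1)] by blast
    then have "levelled_path (q @ [z]) pe"
      using levelled_path_snoc forced_setI[OF \<open>z \<in> forced (Suc n)\<close>] p(2) level_z \<open>level p = n\<close>
      by (auto simp: levelled_step_def)
    moreover have "pe < length (q @ [z]) - 1" using q(1) by (simp add: levelled_path_def)
    ultimately show ?thesis
      using levelled_path_extend_down \<open>x \<in> P\<close> \<open>x \<le> z\<close> level_z level_eq_Suc[OF Suc.prems False]
      by fastforce
  qed (use Suc.IH in blast)
qed

lemma levelled_path_step: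
  assumes path: "levelled_path q pe" and j: "Suc j < length q"
  shows "(covby P (q!j) (q!Suc j)
            \<and> level (q!Suc j) = (if j < pe then level (q!j) else Suc (level (q!j))))
       \<or> (covby P (q!Suc j) (q!j) \<and> pe < j \<and> level (q!Suc j) = level (q!j))"
proof (cases "j < pe")
  case True
  then have "q!j \<in> forced 0" "q!Suc j \<in> forced 0" using path by (simp_all add: levelled_path_def)
  with True path j show ?thesis
    by (simp add: levelled_path_def levelled_step_def level_forced_0 del: forced.simps)
next
  case False
  with path j show ?thesis by (auto simp: levelled_path_def levelled_step_def)
qed

lemma levelled_path_up:
  "levelled_path q pe \<Longrightarrow> Suc j < length q \<Longrightarrow> covby P (q!j) (q!Suc j) \<Longrightarrow> pe \<le> j
   \<Longrightarrow> level (q!Suc j) = Suc (level (q!j))"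
  using levelled_path_step covby_asym by fastforce

lemma levelled_path_down:
  "levelled_path q pe \<Longrightarrow> Suc j < length q \<Longrightarrow> covby P (q!Suc j) (q!j) \<Longrightarrow> pe < j"
  using levelled_path_step covby_asym by blast

lemma levelled_path_level_mono:
  assumes path: "levelled_path q pe" and "i \<le> j" "j < length q"
  shows "level (q!i) \<le> level (q!j)"
  using assms(2,3)
proof (induction j)
  case (Suc j)
  show ?case
  proof (cases "i = Suc j")
    case False
    with Suc have "level (q!i) \<le> level (q!j)" by simp
    with levelled_path_step[OF path Suc.prems(2)] show ?thesis by (auto split: if_splits)
  qed simp
qed simp

lemma levelled_path_level_le_up_steps:
  assumes path: "levelled_path q pe" and "j < length q"
  shows "level (q!j) \<le> card {i. i < j \<and> covby P (q!i) (q!Suc i)}"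
  using assms(2)
proof (induction j)
  case 0
  then show ?case using path by (simp add: levelled_path_def level_forced_0 del: forced.simps)
next
  case (Suc j)
  have "{i. i < Suc j \<and> covby P (q!i) (q!Suc i)} =
      {i. i < j \<and> covby P (q!i) (q!Suc i)} \<union> (if covby P (q!j) (q!Suc j) then {j} else {})"
    by (auto simp: less_Suc_eq)
  with Suc levelled_path_step[OF path Suc.prems] covby_asym show ?case
    by (auto split: if_splits)
qed

lemma levelled_path_level_below:
  assumes path: "levelled_path q pe" and "x \<in> P" "j < length q" "x \<le> q!j"
  shows "level x \<le> level (q!j)"
proof -
  have "q!j \<in> forced_set" using path assms(3) by (auto simp: levelled_path_def)
  then obtain n where "q!j \<in> forced n" by (auto simp: forced_set_def)
  then show ?thesis using level_mono assms(2,4) by blast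
qed

lemma levelled_path_descends_at_level:
  assumes path: "levelled_path q pe" and "pe \<le> a" "a < b" "b < length q"
    and "level (q!a) = level (q!b)"
  shows "q!b < q!a"
proof -
  have "q!Suc k < q!k" if k: "a \<le> k" "k < b" for k
  proof -
    have "Suc k < length q" using k assms(4) by simp
    have "\<not> covby P (q!k) (q!Suc k)"
    proof
      assume up: "covby P (q!k) (q!Suc k)"
      have "level (q!Suc k) = Suc (level (q!k))"
        using levelled_path_up[OF path \<open>Suc k < length q\<close> up] assms(2) k by simp
      moreover have "level (q!a) \<le> level (q!k)" "level (q!Suc k) \<le> level (q!b)"
        using levelled_path_level_mono[OF path] k assms(4) by simp_all
      ultimately show False using assms(5) by simp
    qed
    then show ?thesis
      using levelled_path_step[OF path \<open>Suc k < length q\<close>] by (auto dest: covby_less)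
  qed
  then show ?thesis using nth_less_of_steps_down assms(3) by blast
qed

lemma levelled_path_ascends_initially:
  assumes path: "levelled_path q pe" and "a < b" "b \<le> pe"
  shows "q!a < q!b"
proof -
  have "pe < length q" using path by (simp add: levelled_path_def)
  have "q!k < q!Suc k" if "a \<le> k" "k < b" for k
  proof -
    have "Suc k < length q" "k < pe" using that assms(3) \<open>pe < length q\<close> by auto
    with levelled_path_step[OF path \<open>Suc k < length q\<close>] show ?thesis
      by (auto simp: covby_def)
  qed
  then show ?thesis using nth_less_of_steps_up assms(2) by blast
qed

lemma levelled_path_level_pos:
  assumes path: "levelled_path q pe" and "pe < b" "b < length q"
  shows "0 < level (q!b)"
proof -
  have "Suc pe < length q" using assms(2,3) by simp
  then have "covby P (q!pe) (q!Suc pe)"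
    using levelled_path_step[OF path] levelled_path_down[OF path] by blast
  then have "level (q!Suc pe) = Suc (level (q!pe))"
    using levelled_path_up[OF path \<open>Suc pe < length q\<close>] by simp
  moreover have "level (q!Suc pe) \<le> level (q!b)"
    using levelled_path_level_mono[OF path] assms(2,3) by simp
  ultimately show ?thesis by simp
qed

lemma levelled_path_distinct:
  assumes path: "levelled_path q pe"
  shows "distinct q"
proof -
  have "q!a \<noteq> q!b" if ab: "a < b" "b < length q" for a b
  proof
    assume eq: "q!a = q!b"
    consider "pe \<le> a" | "b \<le> pe" | "a < pe" "pe < b" by linarith
    then show False
    proof cases
      case 1
      then show False using levelled_path_descends_at_level[OF path 1 ab] eq by simp
    next
      case 2
      then show False using levelled_path_ascends_initially[OF path ab(1) 2] eq by simp
    next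
      case 3
      then have "q!a \<in> forced 0" using path by (simp add: levelled_path_def)
      then show False using levelled_path_level_pos[OF path 3(2) ab(2)] eq level_forced_0 by simp
    qed
  qed
  then show ?thesis by (metis distinct_conv_nth linorder_neqE_nat)
qed

lemma levelled_path_is_maximal_path:
  assumes path: "levelled_path q pe" and top: "\<forall>y\<in>P. \<not> last q < y" and "pe < length q - 1"
  shows "is_maximal_path P q"
proof -
  have "q \<noteq> []" "set q \<subseteq> P" using path forced_set_subset by (auto simp: levelled_path_def)
  have steps: "\<And>j. Suc j < length q \<Longrightarrow> covby P (q!j) (q!Suc j) \<or> covby P (q!Suc j) (q!j)"
    using levelled_path_step[OF path] by blast
  have L: "Suc (length q - 2) = length q - 1" "Suc (length q - 2) < length q"
    using assms(3) by auto
  have "\<not> covby P (q!(length q - 1)) (q!(length q - 2))"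
    using top \<open>q \<noteq> []\<close> by (auto simp: covby_def last_conv_nth)
  then have "covby P (q!(length q - 2)) (q!(length q - 1))"
    using steps[OF L(2)] L(1) by simp
  moreover have "\<forall>y\<in>P. \<not> y < q!0" using path by (simp add: levelled_path_def)
  ultimately show ?thesis
    using \<open>q \<noteq> []\<close> \<open>set q \<subseteq> P\<close> steps top levelled_path_distinct[OF path] L
    unfolding is_maximal_path_def is_path_def by simp
qed

lemma levelled_path_block_levels:
  assumes path: "levelled_path q pe" and "is_path P q" and i: "1 \<le> i" "i < nblocks P q"
  defines "a \<equiv> a_end P q i" and "d \<equiv> d_end P q i"
  shows "pe < a" "level (q!a) = Suc (level (q!(a-1)))" "level (q!Suc d) = Suc (level (q!d))"
proof -
  note a = a_end_interior[OF \<open>is_path P q\<close> i, folded a_def]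
  note d = d_end_interior[OF \<open>is_path P q\<close> i, folded a_def d_def]
  show "pe < a" using levelled_path_down[OF path a(2,4)] .
  have "Suc (a - 1) = a" using a(1) by simp
  then show "level (q!a) = Suc (level (q!(a-1)))"
    using levelled_path_up[OF path, of "a - 1"] a \<open>pe < a\<close> by simp
  show "level (q!Suc d) = Suc (level (q!d))"
    using levelled_path_up[OF path d(2,3)] d(1) \<open>pe < a\<close> by simp
qed

lemma levelled_path_genA_level:
  assumes path: "levelled_path q pe" and "1 \<le> m" "m \<le> nblocks P q" "x \<in> genA P q m"
  shows "level x \<le> level (q ! a_end P q m)"
  using levelled_path_level_below[OF path] a_end_in_loc_max_idx(1)[OF assms(2,3)] assms(4)
  by (auto simp: genA_def tA_def loc_max_idx_def)

lemma levelled_path_level_upto_block: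
  assumes path: "levelled_path q pe" and "1 \<le> i" "i \<le> nblocks P q"
    and "x \<in> (\<Union>m\<in>{1..i}. genA P q m)"
  shows "level x \<le> level (q ! a_end P q i)"
proof -
  obtain m where m: "1 \<le> m" "m \<le> i" "x \<in> genA P q m"
    using assms(4) by (auto simp: atLeastAtMost_iff)
  have "a_end P q m \<le> a_end P q i"
    using a_end_strict_mono[OF m(1) _ assms(3)] m(2) by (cases "m = i") auto
  moreover have "a_end P q i < length q"
    using a_end_in_loc_max_idx(1)[OF assms(2,3)] by (simp add: loc_max_idx_def)
  ultimately have "level (q ! a_end P q m) \<le> level (q ! a_end P q i)"
    by (rule levelled_path_level_mono[OF path])
  with levelled_path_genA_level[OF path m(1) _ m(3)] m(2) assms(3) show ?thesis by simp
qed

lemma levelled_path_level_before_block: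
  assumes path: "levelled_path q pe" and "1 \<le> i" "i \<le> nblocks P q"
    and "x \<in> (\<Union>m\<in>{1..<i}. genA P q m) \<union> genA_minus P q i"
  shows "level x \<le> level (q ! (a_end P q i - 1))"
proof -
  let ?a = "a_end P q i"
  have "?a < length q" using a_end_in_loc_max_idx(1)[OF assms(2,3)] by (simp add: loc_max_idx_def)
  obtain j where j: "j < ?a" "level x \<le> level (q!j)"
  proof (cases "x \<in> genA_minus P q i")
    case True
    then obtain j where "x \<in> P" "x \<le> q!j" "j \<le> ?a" "q!j \<noteq> q!?a"
      by (auto simp: genA_minus_def VA_def tA_def)
    moreover from this have "j < ?a" by (cases "j = ?a") auto
    ultimately show ?thesis
      using that levelled_path_level_below[OF path] \<open>?a < length q\<close> by simp
  next
    case False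
    with assms(4) obtain m where m: "1 \<le> m" "m < i" "x \<in> genA P q m" by auto
    then show ?thesis
      using that a_end_strict_mono[OF m(1,2) assms(3)] levelled_path_genA_level[OF path m(1) _ m(3)]
        assms(3) by simp
  qed
  then have "level (q!j) \<le> level (q!(?a - 1))"
    using levelled_path_level_mono[OF path] \<open>?a < length q\<close> by simp
  with j(2) show ?thesis by simp
qed

text \<open>The levels along the path separate the blocks: \<open>D\<^sub>i\<close> lies at level at least that of
  \<open>t(A\<^sub>i)\<close>, strictly above everything generated before \<open>t(A\<^sub>i)\<close>, and \<open>A\<^sub>i\<^sub>+\<^sub>1\<close> starts one
  level above \<open>D\<^sub>i\<close>, strictly above \<open>\<langle>A\<^sub>1\<rangle>, \<dots>, \<langle>A\<^sub>i\<rangle>\<close>.\<close>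

lemma levelled_path_VD_disjoint:
  assumes path: "levelled_path q pe" and "is_path P q" and i: "1 \<le> i" "i < nblocks P q"
  shows "VD P q i \<inter> ((\<Union>m\<in>{1..<i}. genA P q m) \<union> genA_minus P q i \<union> {tA P q i}) = {}"
proof -
  define a d where "a = a_end P q i" and "d = d_end P q i"
  note levels = levelled_path_block_levels[OF path \<open>is_path P q\<close> i, folded a_def d_def]
  note d = d_end_interior[OF \<open>is_path P q\<close> i, folded a_def d_def]
  have "q!j \<notin> (\<Union>m\<in>{1..<i}. genA P q m) \<union> genA_minus P q i \<union> {tA P q i}"
    if j: "a < j" "j \<le> d" for j
  proof
    assume j_in: "q!j \<in> (\<Union>m\<in>{1..<i}. genA P q m) \<union> genA_minus P q i \<union> {tA P q i}"
    have "j < length q" using j d by simp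
    then have "q!j \<noteq> q!a"
      using levelled_path_distinct[OF path] j by (simp add: nth_eq_iff_index_eq)
    with j_in have "q!j \<in> (\<Union>m\<in>{1..<i}. genA P q m) \<union> genA_minus P q i"
      by (auto simp: tA_def a_def)
    then have "level (q!j) \<le> level (q!(a-1))"
      using levelled_path_level_before_block[OF path i(1) less_imp_le[OF i(2)]] by (simp add: a_def)
    moreover have "level (q!a) \<le> level (q!j)"
      using levelled_path_level_mono[OF path] j \<open>j < length q\<close> by simp
    ultimately show False using levels(2) by simp
  qed
  then show ?thesis unfolding VD_def a_def d_def by blast
qed

lemma levelled_path_VA_disjoint:
  assumes path: "levelled_path q pe" and "is_path P q" and i: "1 \<le> i" "i < nblocks P q"
  shows "VA P q (Suc i) \<inter> (\<Union>m\<in>{1..i}. genA P q m) = {}"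
proof -
  define a d where "a = a_end P q i" and "d = d_end P q i"
  note levels = levelled_path_block_levels[OF path \<open>is_path P q\<close> i, folded a_def d_def]
  note d = d_end_interior[OF \<open>is_path P q\<close> i, folded a_def d_def]
  have "q!j \<notin> (\<Union>m\<in>{1..i}. genA P q m)" if j: "d < j" "j \<le> a_end P q (Suc i)" for j
  proof
    assume "q!j \<in> (\<Union>m\<in>{1..i}. genA P q m)"
    then have "level (q!j) \<le> level (q!a)"
      using levelled_path_level_upto_block[OF path i(1) less_imp_le[OF i(2)]] by (simp add: a_def)
    moreover have "a_end P q (Suc i) < length q"
      using a_end_in_loc_max_idx(1)[of "Suc i" P q] i by (simp add: loc_max_idx_def)
    then have "level (q!Suc d) \<le> level (q!j)" using levelled_path_level_mono[OF path] j by simp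
    moreover have "level (q!a) \<le> level (q!d)" using levelled_path_level_mono[OF path] d by simp
    ultimately show False using levels(3) by simp
  qed
  then show ?thesis using i by (auto simp: VA_def d_def)
qed

lemma levelled_path_star_cond:
  assumes "levelled_path q pe" "is_path P q"
  shows "star_cond P q"
  unfolding star_cond_def
proof (intro allI impI)
  fix i assume "1 \<le> i \<and> i \<le> nblocks P q - 1"
  then have "1 \<le> i" "i < nblocks P q" by auto
  then show "VD P q i \<inter> ((\<Union>m\<in>{1..<i}. genA P q m) \<union> genA_minus P q i \<union> {tA P q i}) = {}
    \<and> VA P q (Suc i) \<inter> (\<Union>m\<in>{1..i}. genA P q m) = {}"
    using levelled_path_VD_disjoint[OF assms] levelled_path_VA_disjoint[OF assms] by simp
qed

lemma levelled_path_level_le_rank_star: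
  assumes path: "levelled_path q pe" and top: "\<forall>y\<in>P. \<not> last q < y" and "pe < length q - 1"
  shows "level (last q) \<le> rank_star P"
proof -
  have max: "is_maximal_path P q" using levelled_path_is_maximal_path[OF assms] .
  then have "star_cond P q"
    using levelled_path_star_cond[OF path] by (simp add: is_maximal_path_def)
  have "q \<noteq> []" using path by (simp add: levelled_path_def)
  have "{i. i < length q - 1 \<and> covby P (q!i) (q!Suc i)} = {i. Suc i < length q \<and> covby P (q!i) (q!Suc i)}"
    by auto
  then have "level (last q) \<le> len_star P q"
    using levelled_path_level_le_up_steps[OF path, of "length q - 1"] \<open>q \<noteq> []\<close>
    by (simp add: len_star_def last_conv_nth)
  also have "\<dots> \<le> rank_star P" using len_star_le_rank_star[OF finite_P max \<open>star_cond P q\<close>] .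
  finally show ?thesis .
qed

lemma weight_ge_Q_on_forced_set:
  assumes bound: "(rank_star P + 2) * (Q - 1) + 1 \<le> s" and "l \<in> forced_set"
  shows "Q \<le> c l"
proof (rule ccontr)
  assume "\<not> Q \<le> c l"
  have "l \<in> P" using assms(2) forced_set_subset by auto
  obtain M where M: "M \<in> P" "l \<le> M" and top: "\<forall>y\<in>P. \<not> M < y"
    using finite_has_maximal2[OF finite_P \<open>l \<in> P\<close>] by (metis order.strict_implies_order order.irrefl)
  have "c M \<le> c l" using antitone[OF \<open>l \<in> P\<close> M] .
  then have "M \<in> forced_set" using forced_set_up[OF assms(2) M] \<open>\<not> Q \<le> c l\<close> by linarith
  then obtain n where "M \<in> forced n" by (auto simp: forced_set_def)
  obtain q pe where q: "levelled_path q pe" "last q = M"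
    using exists_levelled_path[OF \<open>M \<in> forced n\<close>] by blast
  have "M \<notin> forced 0" using rank_bound_ge[OF bound] \<open>c M \<le> c l\<close> \<open>\<not> Q \<le> c l\<close> by auto
  have "pe < length q - 1"
  proof (rule ccontr)
    assume "\<not> pe < length q - 1"
    with q(1) have "pe = length q - 1" "q \<noteq> []" by (auto simp: levelled_path_def)
    with q \<open>M \<notin> forced 0\<close> show False
      by (auto simp: levelled_path_def last_conv_nth simp del: forced.simps)
  qed
  have "level M \<le> rank_star P"
    using levelled_path_level_le_rank_star[OF q(1) _ \<open>pe < length q - 1\<close>] top q(2) by simp
  then have "(Q - 1) * level M \<le> (Q - 1) * rank_star P" by simp
  moreover have "s < c M + Q + (Q - 1) * level M"
    using weight_bound_forced level_forced[OF \<open>M \<in> forced n\<close>] by blast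
  moreover have "(rank_star P + 2) * (Q - 1) = (Q - 1) * rank_star P + (Q - 1) + (Q - 1)"
    by (metis add_mult_distrib mult.commute mult_2 add.assoc)
  ultimately show False using bound \<open>c M \<le> c l\<close> \<open>\<not> Q \<le> c l\<close> by linarith
qed

theorem exists_ideal_lowering_weight:
  assumes bound: "(rank_star P + 2) * (Q - 1) + 1 \<le> s"
  shows "\<exists>I\<in>poset_ideals P. (\<forall>x\<in>I. Q \<le> c x) \<and> (\<forall>x\<in>P - I. c x + Q \<le> s)
     \<and> (\<forall>x\<in>P. \<forall>y\<in>P. x \<le> y \<longrightarrow> c y - (if y \<in> I then Q else 0) \<le> c x - (if x \<in> I then Q else 0))"
proof (intro bexI conjI ballI impI)
  show "forced_set \<in> poset_ideals P" by (rule forced_set_poset_ideal)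
  show "Q \<le> c x" if "x \<in> forced_set" for x
    using weight_ge_Q_on_forced_set[OF bound that] .
  show "c x + Q \<le> s" if "x \<in> P - forced_set" for x
  proof -
    have "x \<notin> forced 0" using that forced_setI by blast
    then show ?thesis using that rank_bound_ge[OF bound] Q_pos by auto
  qed
  fix x y assume xy: "x \<in> P" "y \<in> P" "x \<le> y"
  have "c y \<le> c x" using antitone[OF xy] .
  show "c y - (if y \<in> forced_set then Q else 0) \<le> c x - (if x \<in> forced_set then Q else 0)"
  proof (cases "y \<in> forced_set")
    case True
    then have "x \<in> forced_set"
      using forced_set_poset_ideal xy by (auto simp: poset_ideals_def)
    with True \<open>c y \<le> c x\<close> show ?thesis by simp
  next
    case False
    then have "x \<in> forced_set \<Longrightarrow> c y + Q \<le> c x"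
      using forced_set_up[OF _ xy(2,3)] by fastforce
    with False \<open>c y \<le> c x\<close> show ?thesis by auto
  qed
qed

end

section \<open>Monomials of the Hibi ring\<close>

definition hibi_exp :: "'a set \<Rightarrow> ('a option \<Rightarrow>\<^sub>0 nat)" where
  "hibi_exp I = Poly_Mapping.single None 1 + (\<Sum>x\<in>I. Poly_Mapping.single (Some x) 1)"

definition hibi_gen_prod :: "'a set list \<Rightarrow> ('a, 'k::comm_ring_1) mpoly" where
  "hibi_gen_prod Is = prod_list (map hibi_gen Is)"

lemma hibi_gen_eq_monom: "hibi_gen I = Poly_Mapping.single (hibi_exp I) 1"
  by (simp add: hibi_gen_def hibi_exp_def)

lemma hibi_gen_prod_eq_monom:
  "(hibi_gen_prod Is :: ('a, 'k::comm_ring_1) mpoly) = Poly_Mapping.single (sum_list (map hibi_exp Is)) 1"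
proof (induction Is)
  case Nil
  then show ?case by (simp add: hibi_gen_prod_def one_poly_mapping.abs_eq)
next
  case (Cons I Is)
  then show ?case
    by (simp add: hibi_gen_prod_def hibi_gen_eq_monom mult_single)
qed

lemma hibi_gen_prod_append: "hibi_gen_prod (Is @ Js) = hibi_gen_prod Is * hibi_gen_prod Js"
  by (simp add: hibi_gen_prod_def)

lemma lookup_hibi_exps_None: "Poly_Mapping.lookup (sum_list (map hibi_exp Is)) None = length Is"
  by (induction Is) (simp_all add: hibi_exp_def lookup_add lookup_sum lookup_single)

lemma lookup_hibi_exps_Some:
  "\<forall>I\<in>set Is. finite I \<Longrightarrow>
   Poly_Mapping.lookup (sum_list (map hibi_exp Is)) (Some x) = length (filter (\<lambda>I. x \<in> I) Is)"
proof (induction Is)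
  case (Cons I Is)
  have "Poly_Mapping.lookup (hibi_exp I) (Some x) = (\<Sum>y\<in>I. if y = x then 1 else 0)"
    unfolding hibi_exp_def lookup_add lookup_sum
    by (auto simp: lookup_single when_def intro: sum.cong)
  also have "\<dots> = (if x \<in> I then 1 else 0)" using Cons.prems by simp
  finally show ?case using Cons by (simp add: lookup_add)
qed simp

text \<open>A monomial \<open>T\<^sup>n \<Prod> X\<^sub>x\<^bsup>w x\<^esup>\<close> with \<open>w\<close> antitone and bounded by \<open>n\<close> is the product of
  the generators attached to the level sets \<open>{w \<ge> j}\<close>, \<open>j = 1, \<dots>, n\<close>.\<close>

definition level_sets :: "'a set \<Rightarrow> ('a \<Rightarrow> nat) \<Rightarrow> nat \<Rightarrow> 'a set list" where
  "level_sets P w n = map (\<lambda>j. {x\<in>P. j \<le> w x}) [1..<Suc n]"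

lemma length_level_sets: "length (level_sets P w n) = n"
  by (simp add: level_sets_def)

lemma level_sets_poset_ideals:
  assumes "\<And>x y. x \<in> P \<Longrightarrow> y \<in> P \<Longrightarrow> x \<le> y \<Longrightarrow> w y \<le> w x"
  shows "set (level_sets P w n) \<subseteq> poset_ideals P"
  using assms by (fastforce simp: level_sets_def poset_ideals_def)

lemma count_level_sets:
  "length (filter (\<lambda>J. x \<in> J) (level_sets P w n)) = (if x \<in> P then min (w x) n else 0)"
proof -
  have "filter (\<lambda>J. x \<in> J) (level_sets P w n)
      = map (\<lambda>j. {x\<in>P. j \<le> w x}) (filter (\<lambda>j. x \<in> P \<and> j \<le> w x) [1..<Suc n])"
    by (simp add: level_sets_def filter_map o_def)
  moreover have "length (filter (\<lambda>j. j \<le> m) [1..<Suc n]) = min m n" for m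
    by (induction n) auto
  ultimately show ?thesis by simp
qed

text \<open>The part of the Hibi ring of degree at least \<open>s\<close>: the \<open>k\<close>-span of the products of at
  least \<open>s\<close> generators.\<close>

inductive_set hibi_span :: "'a::order set \<Rightarrow> nat \<Rightarrow> ('a, 'k::field) mpoly set"
  for P :: "'a set" and s :: nat where
  zero: "0 \<in> hibi_span P s"
| monom: "Is \<in> lists (poset_ideals P) \<Longrightarrow> s \<le> length Is
    \<Longrightarrow> Poly_Mapping.single 0 a * hibi_gen_prod Is \<in> hibi_span P s"
| add: "f \<in> hibi_span P s \<Longrightarrow> g \<in> hibi_span P s \<Longrightarrow> f + g \<in> hibi_span P s"

lemma hibi_span_mult_monom:
  assumes "g \<in> hibi_span P t" "Is \<in> lists (poset_ideals P)" "s \<le> length Is"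
  shows "Poly_Mapping.single 0 a * hibi_gen_prod Is * g \<in> hibi_span P (s + t)"
  using assms(1)
proof (induction g rule: hibi_span.induct)
  case (monom Js b)
  have "Poly_Mapping.single 0 a * hibi_gen_prod Is * (Poly_Mapping.single 0 b * hibi_gen_prod Js)
      = Poly_Mapping.single 0 (a * b) * hibi_gen_prod (Is @ Js)"
  proof -
    have "Poly_Mapping.single 0 a * hibi_gen_prod Is * (Poly_Mapping.single 0 b * hibi_gen_prod Js)
      = (Poly_Mapping.single 0 a * Poly_Mapping.single 0 b) * (hibi_gen_prod Is * hibi_gen_prod Js)"
      by (simp add: ac_simps)
    then show ?thesis by (simp add: mult_single hibi_gen_prod_append)
  qed
  moreover have "Is @ Js \<in> lists (poset_ideals P)" "s + t \<le> length (Is @ Js)"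
    using assms monom by auto
  ultimately show ?case by (metis hibi_span.monom)
qed (simp_all add: distrib_left hibi_span.zero hibi_span.add)

lemma hibi_span_mult: "f \<in> hibi_span P s \<Longrightarrow> g \<in> hibi_span P t \<Longrightarrow> f * g \<in> hibi_span P (s + t)"
  by (induction f rule: hibi_span.induct)
    (simp_all add: hibi_span_mult_monom distrib_right hibi_span.zero hibi_span.add)

lemma hibi_span_const: "Poly_Mapping.single 0 a \<in> hibi_span P 0"
  using hibi_span.monom[of "[]" P 0 a] by (simp add: hibi_gen_prod_def)

lemma hibi_ring_subset_hibi_span: "f \<in> hibi_ring P \<Longrightarrow> f \<in> hibi_span P 0"
proof (induction f rule: hibi_ring.induct)
  case (gen I)
  then show ?case
    using hibi_span.monom[of "[I]" P 0 1] by (simp add: hibi_gen_prod_def)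
qed (use hibi_span_const hibi_span.add hibi_span_mult[of _ P 0 _ 0] in auto)

lemma lookup_zero_hibi_span_1: "g \<in> hibi_span P 1 \<Longrightarrow> Poly_Mapping.lookup g 0 = 0"
proof (induction g rule: hibi_span.induct)
  case (monom Is a)
  have "sum_list (map hibi_exp Is) \<noteq> 0"
    using lookup_hibi_exps_None[of Is] monom.hyps(2) by (metis lookup_zero not_one_le_zero)
  then show ?case by (simp add: hibi_gen_prod_eq_monom mult_single lookup_single)
qed (simp_all add: lookup_add)

lemma hibi_span_0_split:
  "f \<in> hibi_span P 0 \<Longrightarrow> \<exists>a g. f = Poly_Mapping.single 0 a + g \<and> g \<in> hibi_span P 1"
proof (induction f rule: hibi_span.induct)
  case zero
  then show ?case by (metis add_0 hibi_span.zero single_zero)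
next
  case (monom Is a)
  show ?case
  proof (cases "Is = []")
    case True
    then show ?thesis
      by (intro exI[of _ a] exI[of _ 0]) (simp add: hibi_gen_prod_def hibi_span.zero)
  next
    case False
    then have "Poly_Mapping.single 0 a * hibi_gen_prod Is \<in> hibi_span P 1"
      using monom.hyps by (intro hibi_span.monom) (auto simp: Suc_le_eq)
    then show ?thesis by (metis add_0 single_zero)
  qed
next
  case (add f g)
  then obtain a b f' g' where "f = Poly_Mapping.single 0 a + f'" "g = Poly_Mapping.single 0 b + g'"
    "f' \<in> hibi_span P 1" "g' \<in> hibi_span P 1" by blast
  then show ?case
    by (intro exI[of _ "a + b"] exI[of _ "f' + g'"]) (simp add: single_add ac_simps hibi_span.add)
qed

lemma hibi_max_subset_hibi_span: "f \<in> hibi_max P \<Longrightarrow> f \<in> hibi_span P 1"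
proof -
  assume f: "f \<in> hibi_max P"
  then have "f \<in> hibi_ring P" by (simp add: hibi_max_def)
  then obtain a g where ag: "f = Poly_Mapping.single 0 a + g" "g \<in> hibi_span P 1"
    using hibi_span_0_split[OF hibi_ring_subset_hibi_span] by blast
  then have "a = 0" using f lookup_zero_hibi_span_1[OF ag(2)] by (simp add: hibi_max_def lookup_add)
  with ag show ?thesis by simp
qed

lemma prod_list_hibi_max_in_hibi_span:
  "set xs \<subseteq> hibi_max P \<Longrightarrow> prod_list xs \<in> hibi_span P (length xs)"
proof (induction xs)
  case Nil
  then show ?case using hibi_span_const[of 1 P] by (simp add: one_poly_mapping.abs_eq)
next
  case (Cons x xs)
  then show ?case using hibi_span_mult[OF hibi_max_subset_hibi_span] by fastforce
qed

lemma hibi_gen_prod_in_hibi_ring: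
  "set Js \<subseteq> poset_ideals P \<Longrightarrow> (hibi_gen_prod Js :: ('a::order, 'k::field) mpoly) \<in> hibi_ring P"
proof (induction Js)
  case Nil
  then show ?case using hibi_ring.const[of 1 P] by (simp add: hibi_gen_prod_def one_poly_mapping.abs_eq)
next
  case (Cons J Js)
  then show ?case using hibi_ring.mult[OF hibi_ring.gen] by (auto simp: hibi_gen_prod_def)
qed

lemma hibi_gen_in_hibi_max: "I \<in> poset_ideals P \<Longrightarrow> hibi_gen I \<in> hibi_max P"
proof -
  assume "I \<in> poset_ideals P"
  moreover have "hibi_exp I \<noteq> 0" using lookup_hibi_exps_None[of "[I]"] by auto
  ultimately show ?thesis
    using hibi_ring.gen by (simp add: hibi_max_def hibi_gen_eq_monom lookup_single)
qed

lemma hibi_gen_prod_factor: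
  fixes Is :: "'a::order set list"
  defines "c x \<equiv> length (filter (\<lambda>J. x \<in> J) Is)"
  assumes "finite P" "set Is \<subseteq> poset_ideals P" "I \<subseteq> P" "Q \<le> length Is"
    and "\<And>x. x \<in> I \<Longrightarrow> Q \<le> c x"
    and "\<And>x. x \<in> P \<Longrightarrow> c x - (if x \<in> I then Q else 0) \<le> length Is - Q"
  shows "(hibi_gen_prod Is :: ('a, 'k::comm_ring_1) mpoly)
    = hibi_gen_prod (level_sets P (\<lambda>x. c x - (if x \<in> I then Q else 0)) (length Is - Q)) * hibi_gen I ^ Q"
proof -
  let ?Ls = "level_sets P (\<lambda>x. c x - (if x \<in> I then Q else 0)) (length Is - Q)"
  have "(hibi_gen I :: ('a, 'k) mpoly) ^ Q = hibi_gen_prod (replicate Q I)"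
    by (simp add: hibi_gen_prod_def prod_list_replicate)
  then have rhs: "hibi_gen_prod ?Ls * (hibi_gen I :: ('a, 'k) mpoly) ^ Q = hibi_gen_prod (?Ls @ replicate Q I)"
    by (simp add: hibi_gen_prod_append)
  have subset_P: "J \<subseteq> P" if "J \<in> set Is \<union> set (?Ls @ replicate Q I)" for J
    using that assms(3,4) by (auto simp: poset_ideals_def level_sets_def)
  have finite: "\<forall>J\<in>set Is. finite J" "\<forall>J\<in>set (?Ls @ replicate Q I). finite J"
    using subset_P finite_subset[OF _ \<open>finite P\<close>] by blast+
  have "sum_list (map hibi_exp Is) = sum_list (map hibi_exp (?Ls @ replicate Q I))"
  proof (rule poly_mapping_eqI)
    fix k :: "'a option"
    show "Poly_Mapping.lookup (sum_list (map hibi_exp Is)) k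
      = Poly_Mapping.lookup (sum_list (map hibi_exp (?Ls @ replicate Q I))) k"
    proof (cases k)
      case None
      have "length (?Ls @ replicate Q I) = length Is"
        using \<open>Q \<le> length Is\<close> by (simp add: length_level_sets)
      then show ?thesis unfolding None lookup_hibi_exps_None by simp
    next
      case (Some x)
      have "c x = 0" if "x \<notin> P" using subset_P that by (force simp: c_def filter_empty_conv)
      with assms(4,6,7) show ?thesis
        unfolding Some lookup_hibi_exps_Some[OF finite(1)] lookup_hibi_exps_Some[OF finite(2)]
        by (auto simp: count_level_sets c_def[symmetric])
    qed
  qed
  with rhs show ?thesis by (simp add: hibi_gen_prod_eq_monom)
qed

section \<open>The containment \<open>m\<^sup>r \<subseteq> m\<^bsup>[Q]\<^esup>\<close>\<close>

lemma length_filter_mono: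
  "(\<And>x. x \<in> set xs \<Longrightarrow> A x \<Longrightarrow> B x) \<Longrightarrow> length (filter A xs) \<le> length (filter B xs)"
  by (induction xs) auto

lemma antitone_weight_count:
  assumes "finite P" "set Is \<subseteq> poset_ideals P" "1 \<le> Q"
  shows "antitone_weight P (\<lambda>x. length (filter (\<lambda>J. x \<in> J) Is)) Q"
proof
  fix x y assume "x \<in> P" "y \<in> P" "x \<le> y"
  with assms(2) show "length (filter (\<lambda>J. y \<in> J) Is) \<le> length (filter (\<lambda>J. x \<in> J) Is)"
    by (intro length_filter_mono) (auto simp: poset_ideals_def)
qed (use assms in auto)

lemma hibi_gen_prod_eq_Frobenius_multiple:
  assumes "finite P" and Is: "set Is \<subseteq> poset_ideals P" and "1 \<le> Q"
    and bound: "(rank_star P + 2) * (Q - 1) + 1 \<le> length Is"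
  shows "\<exists>I Ls. I \<in> poset_ideals P \<and> set Ls \<subseteq> poset_ideals P
    \<and> (hibi_gen_prod Is :: ('a::order, 'k::comm_ring_1) mpoly) = hibi_gen_prod Ls * hibi_gen I ^ Q"
proof -
  define c where "c x = length (filter (\<lambda>J. x \<in> J) Is)" for x
  interpret antitone_weight P c "length Is" Q
    unfolding c_def by (rule antitone_weight_count[OF assms(1,2,3)])
  obtain I where "I \<in> poset_ideals P" and I: "(\<forall>x\<in>I. Q \<le> c x) \<and> (\<forall>x\<in>P - I. c x + Q \<le> length Is)
     \<and> (\<forall>x\<in>P. \<forall>y\<in>P. x \<le> y \<longrightarrow> c y - (if y \<in> I then Q else 0) \<le> c x - (if x \<in> I then Q else 0))"
    using exists_ideal_lowering_weight[OF bound] by (rule bexE)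
  define Ls where "Ls = level_sets P (\<lambda>x. c x - (if x \<in> I then Q else 0)) (length Is - Q)"
  have "I \<subseteq> P" using \<open>I \<in> poset_ideals P\<close> by (simp add: poset_ideals_def)
  have "Q \<le> length Is" using rank_bound_ge[OF bound] \<open>1 \<le> Q\<close> by linarith
  have bounded: "c x - (if x \<in> I then Q else 0) \<le> length Is - Q" if "x \<in> P" for x
  proof -
    have "c x \<le> length Is" by (simp add: c_def)
    moreover have "x \<notin> I \<Longrightarrow> c x + Q \<le> length Is" using I that by blast
    ultimately show ?thesis by auto
  qed
  have "(hibi_gen_prod Is :: ('a, 'k) mpoly) = hibi_gen_prod Ls * hibi_gen I ^ Q"
    unfolding Ls_def c_def
    by (rule hibi_gen_prod_factor[OF \<open>finite P\<close> Is \<open>I \<subseteq> P\<close> \<open>Q \<le> length Is\<close>])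
      (use I bounded in \<open>simp_all add: c_def\<close>)
  moreover have "set Ls \<subseteq> poset_ideals P"
    unfolding Ls_def using I by (intro level_sets_poset_ideals) blast
  ultimately show ?thesis using \<open>I \<in> poset_ideals P\<close> by blast
qed

lemma monom_in_frob_pow:
  assumes "finite P" and "set Is \<subseteq> poset_ideals P" and "1 \<le> Q"
    and "(rank_star P + 2) * (Q - 1) + 1 \<le> length Is"
  shows "(Poly_Mapping.single 0 a * hibi_gen_prod Is :: ('a::order, 'k::field) mpoly)
    \<in> frob_pow (hibi_ring P) (hibi_max P) Q"
proof -
  obtain I Ls where "I \<in> poset_ideals P" "set Ls \<subseteq> poset_ideals P"
    and factor: "(hibi_gen_prod Is :: ('a, 'k) mpoly) = hibi_gen_prod Ls * hibi_gen I ^ Q"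
    using hibi_gen_prod_eq_Frobenius_multiple[OF assms] by blast
  have "Poly_Mapping.single 0 a * hibi_gen_prod Ls \<in> hibi_ring P"
    using \<open>set Ls \<subseteq> poset_ideals P\<close>
    by (intro hibi_ring.mult hibi_ring.const hibi_gen_prod_in_hibi_ring)
  moreover have "hibi_gen I ^ Q \<in> {x ^ Q | x. x \<in> hibi_max P}"
    using hibi_gen_in_hibi_max[OF \<open>I \<in> poset_ideals P\<close>] by blast
  ultimately have "Poly_Mapping.single 0 a * hibi_gen_prod Ls * hibi_gen I ^ Q
      \<in> frob_pow (hibi_ring P) (hibi_max P) Q"
    unfolding frob_pow_def by (rule ideal_span.smult)
  then show ?thesis by (simp add: factor mult.assoc)
qed

lemma hibi_span_subset_frob_pow:
  assumes "finite P" "1 \<le> Q" "(rank_star P + 2) * (Q - 1) + 1 \<le> s"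
  shows "hibi_span P s \<subseteq> (frob_pow (hibi_ring P) (hibi_max P) Q :: ('a::order, 'k::field) mpoly set)"
proof
  fix f :: "('a, 'k) mpoly"
  assume "f \<in> hibi_span P s"
  then show "f \<in> frob_pow (hibi_ring P) (hibi_max P) Q"
  proof (induction f rule: hibi_span.induct)
    case (monom Is a)
    then have "set Is \<subseteq> poset_ideals P" "(rank_star P + 2) * (Q - 1) + 1 \<le> length Is"
      using assms(3) by auto
    then show ?case by (rule monom_in_frob_pow[OF assms(1) _ assms(2)])
  qed (simp_all add: frob_pow_def ideal_span.zero ideal_span.add)
qed

lemma ideal_span_mult_left:
  assumes mult: "\<And>a b. a \<in> R \<Longrightarrow> b \<in> R \<Longrightarrow> a * b \<in> R" and "r \<in> R"
  shows "y \<in> ideal_span R S \<Longrightarrow> r * y \<in> ideal_span R S"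
proof (induction y rule: ideal_span.induct)
  case (smult r' t)
  then have "(r * r') * t \<in> ideal_span R S" using mult \<open>r \<in> R\<close> by (simp add: ideal_span.smult)
  then show ?case by (simp add: mult.assoc)
qed (simp_all add: ideal_span.zero distrib_left ideal_span.add)

lemma ideal_span_subset_ideal_span:
  assumes "\<And>a b. a \<in> R \<Longrightarrow> b \<in> R \<Longrightarrow> a * b \<in> R" and "S \<subseteq> ideal_span R T"
  shows "ideal_span R S \<subseteq> ideal_span R T"
proof
  fix y assume "y \<in> ideal_span R S"
  then show "y \<in> ideal_span R T"
  proof (induction y rule: ideal_span.induct)
    case (smult r s)
    then show ?case using ideal_span_mult_left[OF assms(1)] assms(2) by blast
  qed (simp_all add: ideal_span.zero ideal_span.add)
qed

theorem lemma2p7: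
  fixes P :: "'a::order set" and p :: nat
  assumes "finite P" and "P \<noteq> {}"
    and "CHAR('k::field) = p" and "p > 0"
  shows "\<exists>e0. \<forall>e\<ge>e0. \<forall>r::nat. r \<ge> (rank_star P + 2) * (p ^ e - 1) + 1 \<longrightarrow>
           ideal_pow (hibi_ring P :: ('a, 'k) mpoly set) (hibi_max P) r
             \<subseteq> frob_pow (hibi_ring P) (hibi_max P) (p ^ e)"
proof (intro exI allI impI)
  fix e r :: nat
  assume r: "(rank_star P + 2) * (p ^ e - 1) + 1 \<le> r"
  have "1 \<le> p ^ e" using \<open>p > 0\<close> by simp
  have "{prod_list xs | xs. length xs = r \<and> set xs \<subseteq> hibi_max P} \<subseteq> hibi_span P r"
    using prod_list_hibi_max_in_hibi_span by blast
  also have "\<dots> \<subseteq> (frob_pow (hibi_ring P) (hibi_max P) (p ^ e) :: ('a, 'k) mpoly set)"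
    using hibi_span_subset_frob_pow[OF \<open>finite P\<close> \<open>1 \<le> p ^ e\<close> r] .
  finally show "ideal_pow (hibi_ring P :: ('a, 'k) mpoly set) (hibi_max P) r
      \<subseteq> frob_pow (hibi_ring P) (hibi_max P) (p ^ e)"
    unfolding ideal_pow_def frob_pow_def
    by (intro ideal_span_subset_ideal_span) (rule hibi_ring.mult)
qed

end
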